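(* Let $p$ be a prime and $\mathcal G$ a graph of groups in which each edge group $f_e(G_e)$ is a retract of the vertex group $G_{\tau(e)}$. Then $G=\pi_1\mathcal G$ is $p$-efficient if and only if (1) $G$ is residually $p$-finite, (2) the pro-$p$ topology on $G$ induces the full pro-$p$ topology on $G_v$ for every vertex $v$, and (3) every vertex group $G_v$ is closed in the pro-$p$ topology of $G$.
   Context: The pro-$p$ topology on a group has as basis of neighbourhoods of $1$ the normal subgroups of $p$-power index. For $H\le G$, the pro-$p$ topology on $G$ induces the full pro-$p$ topology on $H$ if for every subgroup $K\le H$ of $p$-power index there is a subgroup $J\le G$ of $p$-power index with $J\cap H\subseteq K$. A subgroup is closed in the pro-$p$ topology if it is an intersection of subgroups of $p$-power index. If $G=\pi_1\mathcal G$ is residually $p$-finite, the pro-$p$ topology on $G$ is called $p$-efficient if the vertex and edge groups of $G$ are closed in the pro-$p$ topology of $G$ and the pro-$p$ topology of $G$ induces the full pro-$p$ topology on each vertex and edge group. *)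

theory Defs
  imports "HOL-Algebra.Algebra"
begin

text \<open>A graph of groups: vertex set, edge set (oriented edges; each edge e stands for the
 pair e, e-bar of Serre's formalism), origin/terminus maps, vertex groups, edge groups and
 the two edge monomorphisms into the vertex groups at the origin and terminus.\<close>

record ('v,'e,'a,'b) gog =
  verts :: "'v set"
  edges :: "'e set"
  src :: "'e \<Rightarrow> 'v"
  tgt :: "'e \<Rightarrow> 'v"
  vgrp :: "'v \<Rightarrow> 'a monoid"
  egrp :: "'e \<Rightarrow> 'b monoid"
  emap_src :: "'e \<Rightarrow> 'b \<Rightarrow> 'a"
  emap_tgt :: "'e \<Rightarrow> 'b \<Rightarrow> 'a"

definition graph_of_groups :: "('v,'e,'a,'b) gog \<Rightarrow> bool" where
  "graph_of_groups \<G> \<longleftrightarrow>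
     verts \<G> \<noteq> {} \<and>
     (\<forall>e\<in>edges \<G>. src \<G> e \<in> verts \<G> \<and> tgt \<G> e \<in> verts \<G>) \<and>
     (\<forall>v\<in>verts \<G>. group (vgrp \<G> v)) \<and>
     (\<forall>e\<in>edges \<G>. group (egrp \<G> e) \<and>
        emap_src \<G> e \<in> hom (egrp \<G> e) (vgrp \<G> (src \<G> e)) \<and>
        inj_on (emap_src \<G> e) (carrier (egrp \<G> e)) \<and>
        emap_tgt \<G> e \<in> hom (egrp \<G> e) (vgrp \<G> (tgt \<G> e)) \<and>
        inj_on (emap_tgt \<G> e) (carrier (egrp \<G> e)))"

definition adj_by :: "('v,'e,'a,'b) gog \<Rightarrow> 'e set \<Rightarrow> ('v \<times> 'v) set" where
  "adj_by \<G> S = {(x, y). \<exists>e\<in>S. (src \<G> e = x \<and> tgt \<G> e = y) \<or> (src \<G> e = y \<and> tgt \<G> e = x)}"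

definition connected_by :: "('v,'e,'a,'b) gog \<Rightarrow> 'e set \<Rightarrow> bool" where
  "connected_by \<G> S \<longleftrightarrow> (\<forall>v\<in>verts \<G>. \<forall>w\<in>verts \<G>. (v, w) \<in> (adj_by \<G> S)\<^sup>*)"

definition maximal_tree :: "('v,'e,'a,'b) gog \<Rightarrow> 'e set \<Rightarrow> bool" where
  "maximal_tree \<G> T \<longleftrightarrow> T \<subseteq> edges \<G> \<and> connected_by \<G> T \<and>
     (\<forall>e\<in>T. \<not> connected_by \<G> (T - {e}))"

datatype ('v,'e,'a) letter = VL 'v 'a | TL 'e bool

definition valid_letter :: "('v,'e,'a,'b) gog \<Rightarrow> ('v,'e,'a) letter \<Rightarrow> bool" where
  "valid_letter \<G> l = (case l of VL v a \<Rightarrow> v \<in> verts \<G> \<and> a \<in> carrier (vgrp \<G> v)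
                                | TL e s \<Rightarrow> e \<in> edges \<G>)"

definition valid_word :: "('v,'e,'a,'b) gog \<Rightarrow> ('v,'e,'a) letter list \<Rightarrow> bool" where
  "valid_word \<G> w \<longleftrightarrow> (\<forall>l\<in>set w. valid_letter \<G> l)"

text \<open>Congruence on words generated by the relations of the presentation of
 pi_1(G, T): vertex group multiplication tables, t_e t_e^-1 = 1, t_e = 1 for e in T,
 and t_e f_tgt(g) t_e^-1 = f_src(g).\<close>

inductive gog_eq :: "('v,'e,'a,'b) gog \<Rightarrow> 'e set \<Rightarrow>
    ('v,'e,'a) letter list \<Rightarrow> ('v,'e,'a) letter list \<Rightarrow> bool"
  for \<G> T where
  refl: "gog_eq \<G> T w w"
| sym: "gog_eq \<G> T u w \<Longrightarrow> gog_eq \<G> T w u"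
| trans: "gog_eq \<G> T u w \<Longrightarrow> gog_eq \<G> T w z \<Longrightarrow> gog_eq \<G> T u z"
| ctx: "gog_eq \<G> T u w \<Longrightarrow> gog_eq \<G> T (x @ u @ y) (x @ w @ y)"
| vone: "v \<in> verts \<G> \<Longrightarrow> gog_eq \<G> T [VL v (\<one>\<^bsub>vgrp \<G> v\<^esub>)] []"
| vmult: "v \<in> verts \<G> \<Longrightarrow> a \<in> carrier (vgrp \<G> v) \<Longrightarrow> b \<in> carrier (vgrp \<G> v) \<Longrightarrow>
           gog_eq \<G> T [VL v a, VL v b] [VL v (a \<otimes>\<^bsub>vgrp \<G> v\<^esub> b)]"
| tinv1: "e \<in> edges \<G> \<Longrightarrow> gog_eq \<G> T [TL e True, TL e False] []"
| tinv2: "e \<in> edges \<G> \<Longrightarrow> gog_eq \<G> T [TL e False, TL e True] []"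
| ttree: "e \<in> T \<Longrightarrow> gog_eq \<G> T [TL e True] []"
| tconj: "e \<in> edges \<G> \<Longrightarrow> g \<in> carrier (egrp \<G> e) \<Longrightarrow>
           gog_eq \<G> T [TL e True, VL (tgt \<G> e) (emap_tgt \<G> e g), TL e False]
                      [VL (src \<G> e) (emap_src \<G> e g)]"

definition gog_class :: "('v,'e,'a,'b) gog \<Rightarrow> 'e set \<Rightarrow> ('v,'e,'a) letter list \<Rightarrow>
    ('v,'e,'a) letter list set" where
  "gog_class \<G> T w = {w'. valid_word \<G> w' \<and> gog_eq \<G> T w w'}"

definition pi1 :: "('v,'e,'a,'b) gog \<Rightarrow> 'e set \<Rightarrow> ('v,'e,'a) letter list set monoid" where
  "pi1 \<G> T = \<lparr> carrier = gog_class \<G> T ` {w. valid_word \<G> w},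
               monoid.mult = (\<lambda>A B. \<Union>a\<in>A. \<Union>b\<in>B. gog_class \<G> T (a @ b)),
               monoid.one = gog_class \<G> T [] \<rparr>"

definition vertex_subgroup :: "('v,'e,'a,'b) gog \<Rightarrow> 'e set \<Rightarrow> 'v \<Rightarrow> ('v,'e,'a) letter list set set" where
  "vertex_subgroup \<G> T v = (\<lambda>a. gog_class \<G> T [VL v a]) ` carrier (vgrp \<G> v)"

definition edge_subgroup_tgt :: "('v,'e,'a,'b) gog \<Rightarrow> 'e set \<Rightarrow> 'e \<Rightarrow> ('v,'e,'a) letter list set set" where
  "edge_subgroup_tgt \<G> T e =
     (\<lambda>g. gog_class \<G> T [VL (tgt \<G> e) (emap_tgt \<G> e g)]) ` carrier (egrp \<G> e)"

definition edge_subgroup_src :: "('v,'e,'a,'b) gog \<Rightarrow> 'e set \<Rightarrow> 'e \<Rightarrow> ('v,'e,'a) letter list set set" where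
  "edge_subgroup_src \<G> T e =
     (\<lambda>g. gog_class \<G> T [VL (src \<G> e) (emap_src \<G> e g)]) ` carrier (egrp \<G> e)"

definition is_retract :: "('g,'m) monoid_scheme \<Rightarrow> 'g set \<Rightarrow> bool" where
  "is_retract K H \<longleftrightarrow> subgroup H K \<and>
     (\<exists>r\<in>hom K K. r ` carrier K \<subseteq> H \<and> (\<forall>h\<in>H. r h = h))"

definition p_power_index :: "('g,'m) monoid_scheme \<Rightarrow> nat \<Rightarrow> 'g set \<Rightarrow> bool" where
  "p_power_index G p N \<longleftrightarrow> (\<exists>k. card (rcosets\<^bsub>G\<^esub> N) = p ^ k)"

definition p_normal :: "('g,'m) monoid_scheme \<Rightarrow> nat \<Rightarrow> 'g set \<Rightarrow> bool" where
  "p_normal G p N \<longleftrightarrow> N \<lhd> G \<and> p_power_index G p N"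

text \<open>Open subgroups of the pro-p topology ("subgroups of p-power index" in this sense):
 subgroups containing a normal subgroup of p-power index.\<close>
definition p_open :: "('g,'m) monoid_scheme \<Rightarrow> nat \<Rightarrow> 'g set \<Rightarrow> bool" where
  "p_open G p K \<longleftrightarrow> subgroup K G \<and> (\<exists>N. p_normal G p N \<and> N \<subseteq> K)"

definition residually_p_finite :: "('g,'m) monoid_scheme \<Rightarrow> nat \<Rightarrow> bool" where
  "residually_p_finite G p \<longleftrightarrow>
     (\<forall>g\<in>carrier G. g \<noteq> \<one>\<^bsub>G\<^esub> \<longrightarrow> (\<exists>N. p_normal G p N \<and> g \<notin> N))"

definition p_closed :: "('g,'m) monoid_scheme \<Rightarrow> nat \<Rightarrow> 'g set \<Rightarrow> bool" where
  "p_closed G p H \<longleftrightarrow> H = \<Inter>{K. p_open G p K \<and> H \<subseteq> K}"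

definition induces_full_p :: "('g,'m) monoid_scheme \<Rightarrow> nat \<Rightarrow> 'g set \<Rightarrow> bool" where
  "induces_full_p G p H \<longleftrightarrow>
     (\<forall>K. p_open (G\<lparr>carrier := H\<rparr>) p K \<longrightarrow> (\<exists>J. p_open G p J \<and> J \<inter> H \<subseteq> K))"

definition p_efficient :: "('v,'e,'a,'b) gog \<Rightarrow> 'e set \<Rightarrow> nat \<Rightarrow> bool" where
  "p_efficient \<G> T p \<longleftrightarrow>
     residually_p_finite (pi1 \<G> T) p \<and>
     (\<forall>v\<in>verts \<G>. p_closed (pi1 \<G> T) p (vertex_subgroup \<G> T v) \<and>
                   induces_full_p (pi1 \<G> T) p (vertex_subgroup \<G> T v)) \<and>
     (\<forall>e\<in>edges \<G>. p_closed (pi1 \<G> T) p (edge_subgroup_tgt \<G> T e) \<and>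
                   induces_full_p (pi1 \<G> T) p (edge_subgroup_tgt \<G> T e) \<and>
                   p_closed (pi1 \<G> T) p (edge_subgroup_src \<G> T e) \<and>
                   induces_full_p (pi1 \<G> T) p (edge_subgroup_src \<G> T e))"

end

(* Conversely, an edge group f_e(G_e) is a retract of the
   vertex group G_v, hence of its image in pi_1 once G_v embeds there. A retract H of a subgroup K
   is closed in K as soon as K is residually p-finite (H is the equaliser of r and the identity),
   and K induces the full pro-p topology on H (pull back along r); both properties pass from K to
   G because K is closed in G and carries the full pro-p topology.

   The retractions also give homomorphisms between adjacent vertex groups extending the edge
   identifications, and these embed every G_v into pi_1: transporting along the maximal tree sends
   each vertex group to a fixed G_v0, the stable letters of the remaining edges shift between sheets
   indexed by reduced words in those letters, and the resulting action of pi_1 on functions from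
   sheets to G_v0 restricts to left multiplication on the sheet [] for G_v0. *)

theory Submission
  imports Defs "HOL-Computational_Algebra.Primes"
begin

section \<open>Pro-p topology and retracts\<close>

lemma (in group) rcos_eq_self_iff:
  assumes "subgroup N G" "x \<in> carrier G"
  shows "N #> x = N \<longleftrightarrow> x \<in> N"
  using assms coset_join1 coset_join2 by blast

lemma p_normal_kernel:
  assumes K: "group K" and Q: "group Q" and \<phi>: "\<phi> \<in> hom K Q"
    and card_Q: "card (carrier Q) = p ^ n" and p: "Factorial_Ring.prime p"
  shows "p_normal K p (kernel K Q \<phi>)"
proof -
  interpret hom: group_hom K Q \<phi> using K Q \<phi> by (simp add: group_hom_def group_hom_axioms_def)
  let ?I = "\<phi> ` carrier K"
  have I: "subgroup ?I Q" by (rule hom.img_is_subgroup)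
  have "group (Q\<lparr>carrier := ?I\<rparr>)" using group.subgroup_imp_group[OF Q I] .
  moreover have "\<phi> \<in> hom K (Q\<lparr>carrier := ?I\<rparr>)" using \<phi> by (auto simp: hom_def)
  ultimately interpret img: group_hom K "Q\<lparr>carrier := ?I\<rparr>" \<phi>
    using K by (simp add: group_hom_def group_hom_axioms_def)
  have "(\<lambda>Y. the_elem (\<phi> ` Y)) \<in> iso (K Mod (kernel K (Q\<lparr>carrier := ?I\<rparr>) \<phi>)) (Q\<lparr>carrier := ?I\<rparr>)"
    by (rule img.FactGroup_iso_set) simp
  then have "card (rcosets\<^bsub>K\<^esub> (kernel K Q \<phi>)) = card ?I"
    by (auto simp: iso_def FactGroup_def kernel_def intro: bij_betw_same_card)
  moreover have "card (rcosets\<^bsub>Q\<^esub> ?I) * card ?I = p ^ n"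
    using group.lagrange[OF Q I] card_Q by (simp add: order_def)
  then have "card ?I dvd p ^ n" by (metis dvd_triv_right)
  then obtain m where "card ?I = p ^ m" using divides_primepow_nat[OF p] by blast
  ultimately show ?thesis
    unfolding p_normal_def p_power_index_def using hom.normal_kernel by auto
qed

lemma p_normal_preimage:
  assumes K: "group K" and Q: "group Q" and \<phi>: "\<phi> \<in> hom K Q"
    and N: "p_normal Q p N" and p: "Factorial_Ring.prime p"
  shows "p_normal K p {x \<in> carrier K. \<phi> x \<in> N}"
proof -
  have normal: "N \<lhd> Q" and "\<exists>k. card (rcosets\<^bsub>Q\<^esub> N) = p ^ k"
    using N unfolding p_normal_def p_power_index_def by auto
  then obtain k where "card (carrier (Q Mod N)) = p ^ k" by (auto simp: FactGroup_def)
  moreover have "(\<lambda>x. N #>\<^bsub>Q\<^esub> \<phi> x) \<in> hom K (Q Mod N)"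
    using hom_compose[OF \<phi> normal.r_coset_hom_Mod[OF normal]] by (simp add: comp_def)
  ultimately have "p_normal K p (kernel K (Q Mod N) (\<lambda>x. N #>\<^bsub>Q\<^esub> \<phi> x))"
    using p_normal_kernel K normal.factorgroup_is_group[OF normal] p by blast
  moreover have "kernel K (Q Mod N) (\<lambda>x. N #>\<^bsub>Q\<^esub> \<phi> x) = {x \<in> carrier K. \<phi> x \<in> N}"
    using group.rcos_eq_self_iff[OF Q normal_imp_subgroup[OF normal]] hom_in_carrier[OF \<phi>]
    by (auto simp: kernel_def)
  ultimately show ?thesis by simp
qed

lemma p_normal_Int:
  assumes K: "group K" and N1: "p_normal K p N1" and N2: "p_normal K p N2" and p: "Factorial_Ring.prime p"
  shows "p_normal K p (N1 \<inter> N2)"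
proof -
  have normal: "N1 \<lhd> K" "N2 \<lhd> K"
    using N1 N2 unfolding p_normal_def by auto
  obtain k1 k2 where "card (rcosets\<^bsub>K\<^esub> N1) = p ^ k1" "card (rcosets\<^bsub>K\<^esub> N2) = p ^ k2"
    using N1 N2 unfolding p_normal_def p_power_index_def by auto
  then have "card (carrier ((K Mod N1) \<times>\<times> (K Mod N2))) = p ^ (k1 + k2)"
    by (simp add: FactGroup_def card_cartesian_product power_add)
  moreover have "(\<lambda>x. (N1 #>\<^bsub>K\<^esub> x, N2 #>\<^bsub>K\<^esub> x)) \<in> hom K ((K Mod N1) \<times>\<times> (K Mod N2))"
    using normal.r_coset_hom_Mod[OF normal(1)] normal.r_coset_hom_Mod[OF normal(2)]
    by (simp add: hom_pairwise comp_def)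
  ultimately have "p_normal K p (kernel K ((K Mod N1) \<times>\<times> (K Mod N2)) (\<lambda>x. (N1 #>\<^bsub>K\<^esub> x, N2 #>\<^bsub>K\<^esub> x)))"
    using p_normal_kernel K DirProd_group normal.factorgroup_is_group normal p by metis
  moreover have "kernel K ((K Mod N1) \<times>\<times> (K Mod N2)) (\<lambda>x. (N1 #>\<^bsub>K\<^esub> x, N2 #>\<^bsub>K\<^esub> x)) = N1 \<inter> N2"
    using group.rcos_eq_self_iff[OF K] normal_imp_subgroup[OF normal(1)]
      normal_imp_subgroup[OF normal(2)] subgroup.subset[OF normal_imp_subgroup[OF normal(1)]]
    by (auto simp: kernel_def)
  ultimately show ?thesis by simp
qed

lemma p_open_carrier:
  fixes G (structure)
  assumes "group G"
  shows "p_open G p (carrier G)"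
proof -
  interpret group G by fact
  have "rcosets (carrier G) = {carrier G}"
    using subgroup.rcos_const[OF subgroup_self is_group] unfolding RCOSETS_def by auto
  then have "card (rcosets (carrier G)) = p ^ 0" by simp
  then have "p_power_index G p (carrier G)"
    unfolding p_power_index_def by blast
  then show ?thesis
    unfolding p_open_def p_normal_def using normal_self subgroup_self by blast
qed

lemma p_open_normal_mult:
  fixes G (structure)
  assumes G: "group G" and N: "p_normal G p N" and K: "subgroup K G"
  shows "p_open G p (N <#>\<^bsub>G\<^esub> K)" and "K \<subseteq> N <#>\<^bsub>G\<^esub> K"
proof -
  interpret group G by fact
  have normal: "N \<lhd> G" using N unfolding p_normal_def by blast
  have "n \<in> N <#> K" if n: "n \<in> N" for n
  proof -
    have "n \<otimes> \<one> \<in> N <#> K"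
      using n subgroup.one_closed[OF K] unfolding set_mult_def by blast
    then show ?thesis using n normal_imp_subgroup[OF normal] subgroup.mem_carrier by force
  qed
  then show "p_open G p (N <#> K)"
    unfolding p_open_def using mult_norm_subgroup[OF normal K] N by blast
  show "K \<subseteq> N <#> K"
  proof
    fix k assume k: "k \<in> K"
    have "\<one> \<otimes> k \<in> N <#> K"
      using k subgroup.one_closed[OF normal_imp_subgroup[OF normal]] unfolding set_mult_def by blast
    then show "k \<in> N <#> K" using k subgroup.mem_carrier[OF K] by force
  qed
qed

lemma residually_p_finite_subgroup:
  assumes G: "group G" and H: "subgroup H G" and res: "residually_p_finite G p"
    and p: "Factorial_Ring.prime p"
  shows "residually_p_finite (G\<lparr>carrier := H\<rparr>) p"
  unfolding residually_p_finite_def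
proof (intro ballI impI)
  fix h assume h: "h \<in> carrier (G\<lparr>carrier := H\<rparr>)" and "h \<noteq> \<one>\<^bsub>G\<lparr>carrier := H\<rparr>\<^esub>"
  then obtain N where N: "p_normal G p N" "h \<notin> N"
    using res subgroup.subset[OF H] unfolding residually_p_finite_def by auto
  have "id \<in> hom (G\<lparr>carrier := H\<rparr>) G"
    using subgroup.subset[OF H] by (auto simp: hom_def)
  then have "p_normal (G\<lparr>carrier := H\<rparr>) p {x \<in> carrier (G\<lparr>carrier := H\<rparr>). id x \<in> N}"
    using p_normal_preimage subgroup.subgroup_is_group[OF H G] G N(1) p by blast
  then show "\<exists>M. p_normal (G\<lparr>carrier := H\<rparr>) p M \<and> h \<notin> M"
    using N(2) by auto
qed

lemma retraction_defect_mem: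
  fixes H (structure)
  assumes H: "group H" and r: "r \<in> hom H H" and r_id: "\<forall>y\<in>E. r y = y" and E: "E \<subseteq> carrier H"
    and N: "subgroup N H" and x: "x \<in> (N \<inter> {y \<in> carrier H. r y \<in> N}) <#> E"
  shows "x \<otimes> inv (r x) \<in> N"
proof -
  interpret group H by fact
  obtain m e where m: "m \<in> N" "m \<in> carrier H" "r m \<in> N" and e: "e \<in> E" and x_eq: "x = m \<otimes> e"
    using x unfolding set_mult_def by blast
  have e_carrier: "e \<in> carrier H" and r_m: "r m \<in> carrier H"
    using e E hom_in_carrier[OF r m(2)] by auto
  have "r x = r m \<otimes> e"
    using x_eq hom_mult[OF r m(2) e_carrier] r_id e by simp
  then have "x \<otimes> inv (r x) = m \<otimes> inv (r m)"
    using x_eq m(2) e_carrier r_m by (simp add: inv_mult_group m_assoc[symmetric]) (simp add: m_assoc)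
  then show ?thesis
    using m N by (simp add: subgroup.m_closed subgroup.m_inv_closed)
qed

lemma p_closed_retract:
  fixes H (structure)
  assumes H: "group H" and res: "residually_p_finite H p" and p: "Factorial_Ring.prime p"
    and E: "is_retract H E"
  shows "p_closed H p E"
  unfolding p_closed_def
proof
  interpret group H by fact
  obtain r where E_sub: "subgroup E H" and r: "r \<in> hom H H" and r_into: "r ` carrier H \<subseteq> E"
    and r_id: "\<forall>x\<in>E. r x = x"
    using E unfolding is_retract_def by blast
  show "\<Inter>{K. p_open H p K \<and> E \<subseteq> K} \<subseteq> E"
  proof (rule subsetI, rule ccontr)
    fix g assume g: "g \<in> \<Inter>{K. p_open H p K \<and> E \<subseteq> K}" and "g \<notin> E"
    have g_carrier: "g \<in> carrier H" and r_g: "r g \<in> carrier H"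
      using g p_open_carrier[OF H] subgroup.subset[OF E_sub] hom_in_carrier[OF r] by blast+
    have "g \<otimes> inv (r g) \<noteq> \<one>"
    proof
      assume "g \<otimes> inv (r g) = \<one>"
      then have "inv (inv (r g)) = g"
        using g_carrier r_g by (intro inv_equality) auto
      then show False using \<open>g \<notin> E\<close> r_into g_carrier r_g by auto
    qed
    then obtain N where N: "p_normal H p N" "g \<otimes> inv (r g) \<notin> N"
      using res g_carrier r_g unfolding residually_p_finite_def by (meson m_closed inv_closed)
    let ?M = "N \<inter> {x \<in> carrier H. r x \<in> N}"
    have "p_normal H p ?M"
      by (rule p_normal_Int[OF H N(1) p_normal_preimage[OF H H r N(1) p] p])
    then have "g \<in> ?M <#> E"
      using g p_open_normal_mult[OF H _ E_sub] by blast
    then show False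
      using retraction_defect_mem[OF H r r_id subgroup.subset[OF E_sub]] N normal_imp_subgroup
      unfolding p_normal_def by blast
  qed
qed blast

lemma induces_full_p_retract:
  fixes H (structure)
  assumes H: "group H" and E: "is_retract H E" and p: "Factorial_Ring.prime p"
  shows "induces_full_p H p E"
  unfolding induces_full_p_def
proof (intro allI impI)
  interpret group H by fact
  fix K assume "p_open (H\<lparr>carrier := E\<rparr>) p K"
  then obtain N where K_sub: "subgroup K (H\<lparr>carrier := E\<rparr>)"
    and N: "p_normal (H\<lparr>carrier := E\<rparr>) p N" and "N \<subseteq> K"
    unfolding p_open_def by blast
  obtain r where E_sub: "subgroup E H" and r: "r \<in> hom H H" and r_into: "r ` carrier H \<subseteq> E"
    and r_id: "\<forall>x\<in>E. r x = x"
    using E unfolding is_retract_def by blast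
  have "r \<in> hom H (H\<lparr>carrier := E\<rparr>)"
    using r r_into by (auto simp: hom_def)
  then have M: "p_normal H p {x \<in> carrier H. r x \<in> N}"
    using p_normal_preimage[OF H subgroup.subgroup_is_group[OF E_sub H] _ N p] by blast
  have K: "subgroup K H" using incl_subgroup[OF E_sub K_sub] .
  have "x \<in> K" if x: "x \<in> {x \<in> carrier H. r x \<in> N} <#> K" "x \<in> E" for x
  proof -
    obtain m k where m: "m \<in> carrier H" "r m \<in> N" and k: "k \<in> K" and x_eq: "x = m \<otimes> k"
      using x(1) unfolding set_mult_def by blast
    have k_E: "k \<in> E" and k_carrier: "k \<in> carrier H"
      using k subgroup.subset[OF K_sub] subgroup.subset[OF K] by auto
    have "x = r m \<otimes> k"
      using r_id x(2) x_eq hom_mult[OF r m(1) k_carrier] k_E by simp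
    then show "x \<in> K"
      using m(2) \<open>N \<subseteq> K\<close> k subgroup.m_closed[OF K] by blast
  qed
  then show "\<exists>J. p_open H p J \<and> J \<inter> E \<subseteq> K"
    using p_open_normal_mult(1)[OF H M K] by blast
qed

lemma induces_full_p_trans:
  assumes "E \<subseteq> H" and H: "induces_full_p G p H"
    and E: "induces_full_p (G\<lparr>carrier := H\<rparr>) p E"
  shows "induces_full_p G p E"
  unfolding induces_full_p_def
proof (intro allI impI)
  fix K assume "p_open (G\<lparr>carrier := E\<rparr>) p K"
  then obtain J1 where J1: "p_open (G\<lparr>carrier := H\<rparr>) p J1" "J1 \<inter> E \<subseteq> K"
    using E unfolding induces_full_p_def by auto
  then obtain J where "p_open G p J" "J \<inter> H \<subseteq> J1"
    using H unfolding induces_full_p_def by blast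
  then show "\<exists>J. p_open G p J \<and> J \<inter> E \<subseteq> K"
    using J1(2) \<open>E \<subseteq> H\<close> by blast
qed

lemma p_open_extend:
  fixes G (structure)
  assumes G: "group G" and H: "subgroup H G" and full: "induces_full_p G p H"
    and K: "p_open (G\<lparr>carrier := H\<rparr>) p K"
  shows "\<exists>L. p_open G p L \<and> L \<inter> H = K"
proof -
  interpret group G by fact
  obtain J where "p_open G p J" and J: "J \<inter> H \<subseteq> K"
    using full K unfolding induces_full_p_def by blast
  then obtain N where N: "p_normal G p N" "N \<subseteq> J"
    unfolding p_open_def by blast
  have K_sub: "subgroup K (G\<lparr>carrier := H\<rparr>)" using K unfolding p_open_def by blast
  then have K_H: "K \<subseteq> H" using subgroup.subset by fastforce
  have K_G: "subgroup K G" using incl_subgroup[OF H K_sub] .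
  have "x \<in> K" if x: "x \<in> N <#> K" "x \<in> H" for x
  proof -
    obtain n k where n: "n \<in> N" and k: "k \<in> K" and x_eq: "x = n \<otimes> k"
      using x(1) unfolding set_mult_def by blast
    have n_carrier: "n \<in> carrier G" and k_carrier: "k \<in> carrier G"
      using n k N(1) K_G subgroup.subset normal_imp_subgroup unfolding p_normal_def by blast+
    have "n = x \<otimes> inv k" using x_eq n_carrier k_carrier by (simp add: m_assoc)
    then have "n \<in> H"
      using x(2) k K_H subgroup.m_closed[OF H] subgroup.m_inv_closed[OF H] by auto
    then have "n \<in> K" using n N(2) J by blast
    then show "x \<in> K" using x_eq k subgroup.m_closed[OF K_G] by blast
  qed
  then show ?thesis
    using p_open_normal_mult[OF G N(1) K_G] K_H by blast
qed

lemma p_closed_trans: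
  assumes G: "group G" and H: "subgroup H G" and closed: "p_closed G p H"
    and full: "induces_full_p G p H" and "E \<subseteq> H" and E: "p_closed (G\<lparr>carrier := H\<rparr>) p E"
  shows "p_closed G p E"
  unfolding p_closed_def
proof
  show "\<Inter>{L. p_open G p L \<and> E \<subseteq> L} \<subseteq> E"
  proof
    fix g assume g: "g \<in> \<Inter>{L. p_open G p L \<and> E \<subseteq> L}"
    have "g \<in> \<Inter>{L. p_open G p L \<and> H \<subseteq> L}"
      using g \<open>E \<subseteq> H\<close> by blast
    then have "g \<in> H"
      using closed unfolding p_closed_def by simp
    have "g \<in> K" if K: "p_open (G\<lparr>carrier := H\<rparr>) p K" "E \<subseteq> K" for K
    proof -
      obtain L where "p_open G p L" "L \<inter> H = K"
        using p_open_extend[OF G H full K(1)] by blast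
      then show "g \<in> K" using g \<open>g \<in> H\<close> K(2) \<open>E \<subseteq> H\<close> by blast
    qed
    then show "g \<in> E"
      using E unfolding p_closed_def by blast
  qed
qed blast

lemma retract_of_closed_subgroup:
  assumes G: "group G" and p: "Factorial_Ring.prime p" and res: "residually_p_finite G p"
    and H: "subgroup H G" and closed: "p_closed G p H" and full: "induces_full_p G p H"
    and E: "is_retract (G\<lparr>carrier := H\<rparr>) E"
  shows "p_closed G p E" and "induces_full_p G p E"
proof -
  have GH: "group (G\<lparr>carrier := H\<rparr>)" using subgroup.subgroup_is_group[OF H G] .
  have "E \<subseteq> H" using E subgroup.subset unfolding is_retract_def by fastforce
  then show "p_closed G p E"
    using p_closed_trans[OF G H closed full \<open>E \<subseteq> H\<close>]
      p_closed_retract[OF GH residually_p_finite_subgroup[OF G H res p] p E] by blast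
  show "induces_full_p G p E"
    using induces_full_p_trans[OF \<open>E \<subseteq> H\<close> full induces_full_p_retract[OF GH E p]] .
qed

lemma retract_transfer_hom:
  assumes B: "group B" and f1: "f1 \<in> hom B A1" "inj_on f1 (carrier B)" and f2: "f2 \<in> hom B A2"
    and retract: "is_retract A1 (f1 ` carrier B)"
  shows "\<exists>\<phi>\<in>hom A1 A2. \<forall>g\<in>carrier B. \<phi> (f1 g) = f2 g"
proof -
  obtain r where r: "r \<in> hom A1 A1" and r_into: "r ` carrier A1 \<subseteq> f1 ` carrier B"
    and r_id: "\<forall>h\<in>f1 ` carrier B. r h = h"
    using retract unfolding is_retract_def by blast
  define \<phi> where "\<phi> x = f2 (inv_into (carrier B) f1 (r x))" for x
  have \<phi>_f1: "\<phi> (f1 g) = f2 g" if "g \<in> carrier B" for g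
    unfolding \<phi>_def using that r_id f1(2) by simp
  have "\<phi> \<in> hom A1 A2"
  proof (rule homI)
    fix x assume "x \<in> carrier A1"
    then obtain g where "g \<in> carrier B" "r x = f1 g" using r_into by blast
    then show "\<phi> x \<in> carrier A2" unfolding \<phi>_def using f1(2) f2 by (simp add: hom_in_carrier)
  next
    fix x y assume x: "x \<in> carrier A1" and y: "y \<in> carrier A1"
    obtain g h where g: "g \<in> carrier B" "r x = f1 g" and h: "h \<in> carrier B" "r y = f1 h"
      using r_into x y by blast
    have gh: "g \<otimes>\<^bsub>B\<^esub> h \<in> carrier B" using B g h by (simp add: group.is_monoid monoid.m_closed)
    have "r (x \<otimes>\<^bsub>A1\<^esub> y) = f1 (g \<otimes>\<^bsub>B\<^esub> h)"
      using hom_mult[OF r x y] hom_mult[OF f1(1) g(1) h(1)] g h by simp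
    then show "\<phi> (x \<otimes>\<^bsub>A1\<^esub> y) = \<phi> x \<otimes>\<^bsub>A2\<^esub> \<phi> y"
      unfolding \<phi>_def using g h gh f1(2) hom_mult[OF f2 g(1) h(1)] by simp
  qed
  then show ?thesis using \<phi>_f1 by blast
qed

lemma is_retract_image:
  assumes A: "group A" and P: "group P" and \<iota>: "\<iota> \<in> hom A P" "inj_on \<iota> (carrier A)"
    and H: "is_retract A H"
  shows "is_retract (P\<lparr>carrier := \<iota> ` carrier A\<rparr>) (\<iota> ` H)"
proof -
  interpret hom: group_hom A P \<iota> using A P \<iota>(1) by (simp add: group_hom_def group_hom_axioms_def)
  obtain r where H_sub: "subgroup H A" and r: "r \<in> hom A A" and r_into: "r ` carrier A \<subseteq> H"
    and r_id: "\<forall>x\<in>H. r x = x"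
    using H unfolding is_retract_def by blast
  define R where "R y = \<iota> (r (inv_into (carrier A) \<iota> y))" for y
  have R_\<iota>: "R (\<iota> a) = \<iota> (r a)" if "a \<in> carrier A" for a
    unfolding R_def using \<iota>(2) that by simp
  have "R \<in> hom (P\<lparr>carrier := \<iota> ` carrier A\<rparr>) (P\<lparr>carrier := \<iota> ` carrier A\<rparr>)"
  proof (rule homI)
    fix y assume "y \<in> carrier (P\<lparr>carrier := \<iota> ` carrier A\<rparr>)"
    then show "R y \<in> carrier (P\<lparr>carrier := \<iota> ` carrier A\<rparr>)"
      using R_\<iota> hom_in_carrier[OF r] by auto
  next
    fix y z assume "y \<in> carrier (P\<lparr>carrier := \<iota> ` carrier A\<rparr>)" "z \<in> carrier (P\<lparr>carrier := \<iota> ` carrier A\<rparr>)"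
    then obtain a b where a: "a \<in> carrier A" "y = \<iota> a" and b: "b \<in> carrier A" "z = \<iota> b" by auto
    have yz: "y \<otimes>\<^bsub>P\<^esub> z = \<iota> (a \<otimes>\<^bsub>A\<^esub> b)" and ab: "a \<otimes>\<^bsub>A\<^esub> b \<in> carrier A"
      using a b by simp_all
    have "R (y \<otimes>\<^bsub>P\<^esub> z) = \<iota> (r (a \<otimes>\<^bsub>A\<^esub> b))"
      unfolding yz by (rule R_\<iota>[OF ab])
    also have "\<dots> = R y \<otimes>\<^bsub>P\<^esub> R z"
      using a b R_\<iota> hom_mult[OF r] hom_in_carrier[OF r] by simp
    finally show "R (y \<otimes>\<^bsub>P\<lparr>carrier := \<iota> ` carrier A\<rparr>\<^esub> z) =
        R y \<otimes>\<^bsub>P\<lparr>carrier := \<iota> ` carrier A\<rparr>\<^esub> R z"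
      by simp
  qed
  moreover have "R ` carrier (P\<lparr>carrier := \<iota> ` carrier A\<rparr>) \<subseteq> \<iota> ` H"
    using R_\<iota> r_into by auto
  moreover have "\<forall>y\<in>\<iota> ` H. R y = y"
    using R_\<iota> r_id subgroup.subset[OF H_sub] by auto
  moreover have "subgroup (\<iota> ` H) (P\<lparr>carrier := \<iota> ` carrier A\<rparr>)"
    using group.subgroup_incl[OF P hom.subgroup_img_is_subgroup[OF H_sub] hom.img_is_subgroup]
      subgroup.subset[OF H_sub] by blast
  ultimately show ?thesis unfolding is_retract_def by blast
qed

section \<open>The fundamental group\<close>

definition vertex_inclusion :: "('v,'e,'a,'b) gog \<Rightarrow> 'e set \<Rightarrow> 'v \<Rightarrow> 'a \<Rightarrow> ('v,'e,'a) letter list set" where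
  "vertex_inclusion \<G> T v a = gog_class \<G> T [VL v a]"

lemma vertex_subgroup_eq: "vertex_subgroup \<G> T v = vertex_inclusion \<G> T v ` carrier (vgrp \<G> v)"
  unfolding vertex_subgroup_def vertex_inclusion_def ..

lemma edge_subgroup_tgt_eq:
  "edge_subgroup_tgt \<G> T e = vertex_inclusion \<G> T (tgt \<G> e) ` emap_tgt \<G> e ` carrier (egrp \<G> e)"
  unfolding edge_subgroup_tgt_def vertex_inclusion_def by (simp add: image_image)

lemma edge_subgroup_src_eq:
  "edge_subgroup_src \<G> T e = vertex_inclusion \<G> T (src \<G> e) ` emap_src \<G> e ` carrier (egrp \<G> e)"
  unfolding edge_subgroup_src_def vertex_inclusion_def by (simp add: image_image)

lemma gog_class_eq: "gog_eq \<G> T u w \<Longrightarrow> gog_class \<G> T u = gog_class \<G> T w"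
  unfolding gog_class_def using gog_eq.trans gog_eq.sym by metis

lemma gog_class_eqD: "valid_word \<G> u \<Longrightarrow> gog_class \<G> T u = gog_class \<G> T w \<Longrightarrow> gog_eq \<G> T w u"
  unfolding gog_class_def using gog_eq.refl[of \<G> T u] by (metis (no_types, lifting) mem_Collect_eq)

lemma gog_eq_append: "gog_eq \<G> T a a' \<Longrightarrow> gog_eq \<G> T b b' \<Longrightarrow> gog_eq \<G> T (a @ b) (a' @ b')"
  using gog_eq.ctx[of \<G> T a a' "[]" b] gog_eq.ctx[of \<G> T b b' a' "[]"]
    gog_eq.trans[of \<G> T "a @ b" "a' @ b" "a' @ b'"] by simp

lemma valid_word_append [simp]: "valid_word \<G> (a @ b) \<longleftrightarrow> valid_word \<G> a \<and> valid_word \<G> b"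
  unfolding valid_word_def by auto

lemma carrier_pi1: "carrier (pi1 \<G> T) = gog_class \<G> T ` {w. valid_word \<G> w}"
  unfolding pi1_def by simp

lemma one_pi1: "\<one>\<^bsub>pi1 \<G> T\<^esub> = gog_class \<G> T []"
  unfolding pi1_def by simp

lemma mult_pi1:
  assumes "valid_word \<G> a" "valid_word \<G> b"
  shows "gog_class \<G> T a \<otimes>\<^bsub>pi1 \<G> T\<^esub> gog_class \<G> T b = gog_class \<G> T (a @ b)"
proof -
  have "gog_class \<G> T (a' @ b') = gog_class \<G> T (a @ b)"
    if "a' \<in> gog_class \<G> T a" "b' \<in> gog_class \<G> T b" for a' b'
  proof -
    have "gog_eq \<G> T a a'" "gog_eq \<G> T b b'"
      using that unfolding gog_class_def by auto
    then show ?thesis by (metis gog_class_eq gog_eq_append)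
  qed
  moreover have "a \<in> gog_class \<G> T a" "b \<in> gog_class \<G> T b"
    using assms gog_eq.refl unfolding gog_class_def by auto
  ultimately have "(\<Union>a'\<in>gog_class \<G> T a. \<Union>b'\<in>gog_class \<G> T b. gog_class \<G> T (a' @ b')) =
      gog_class \<G> T (a @ b)"
    by blast
  then show ?thesis unfolding pi1_def by simp
qed

fun inv_letter :: "('v,'e,'a,'b) gog \<Rightarrow> ('v,'e,'a) letter \<Rightarrow> ('v,'e,'a) letter" where
  "inv_letter \<G> (VL v a) = VL v (inv\<^bsub>vgrp \<G> v\<^esub> a)"
| "inv_letter \<G> (TL e b) = TL e (\<not> b)"

definition inv_word :: "('v,'e,'a,'b) gog \<Rightarrow> ('v,'e,'a) letter list \<Rightarrow> ('v,'e,'a) letter list" where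
  "inv_word \<G> w = rev (map (inv_letter \<G>) w)"

lemma valid_letter_inv_letter:
  assumes "graph_of_groups \<G>" "valid_letter \<G> l"
  shows "valid_letter \<G> (inv_letter \<G> l)"
  using assms by (cases l) (auto simp: valid_letter_def graph_of_groups_def)

lemma valid_word_inv_word:
  assumes "graph_of_groups \<G>" "valid_word \<G> w"
  shows "valid_word \<G> (inv_word \<G> w)"
  using assms valid_letter_inv_letter unfolding valid_word_def inv_word_def by auto

lemma gog_eq_inv_letter:
  assumes "graph_of_groups \<G>" "valid_letter \<G> l"
  shows "gog_eq \<G> T [inv_letter \<G> l, l] []"
proof (cases l)
  case (VL v a)
  then have v: "v \<in> verts \<G>" and a: "a \<in> carrier (vgrp \<G> v)" and "group (vgrp \<G> v)"
    using assms unfolding valid_letter_def graph_of_groups_def by auto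
  then have "gog_eq \<G> T [VL v (inv\<^bsub>vgrp \<G> v\<^esub> a), VL v a] [VL v \<one>\<^bsub>vgrp \<G> v\<^esub>]"
    using gog_eq.vmult[OF v, of "inv\<^bsub>vgrp \<G> v\<^esub> a" a] by (simp add: group.l_inv)
  then show ?thesis using VL gog_eq.vone[OF v] gog_eq.trans by fastforce
next
  case (TL e b)
  then have "e \<in> edges \<G>" using assms(2) unfolding valid_letter_def by simp
  then show ?thesis using TL gog_eq.tinv1 gog_eq.tinv2 by (cases b) auto
qed

lemma gog_eq_inv_word:
  assumes "graph_of_groups \<G>"
  shows "valid_word \<G> w \<Longrightarrow> gog_eq \<G> T (inv_word \<G> w @ w) []"
proof (induction w)
  case Nil
  then show ?case by (simp add: inv_word_def gog_eq.refl)
next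
  case (Cons l w)
  then have "valid_letter \<G> l" "valid_word \<G> w" unfolding valid_word_def by auto
  then have "gog_eq \<G> T (inv_word \<G> w @ [inv_letter \<G> l, l] @ w) (inv_word \<G> w @ [] @ w)"
    by (intro gog_eq.ctx gog_eq_inv_letter[OF assms])
  then show ?case
    using Cons.IH \<open>valid_word \<G> w\<close> gog_eq.trans unfolding inv_word_def by fastforce
qed

lemma group_pi1:
  assumes "graph_of_groups \<G>"
  shows "group (pi1 \<G> T)"
proof (rule groupI)
  have nil: "valid_word \<G> []" by (simp add: valid_word_def)
  then show "\<one>\<^bsub>pi1 \<G> T\<^esub> \<in> carrier (pi1 \<G> T)"
    unfolding carrier_pi1 one_pi1 by blast
  fix x y z assume "x \<in> carrier (pi1 \<G> T)" "y \<in> carrier (pi1 \<G> T)" "z \<in> carrier (pi1 \<G> T)"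
  then obtain a b c where "valid_word \<G> a" "valid_word \<G> b" "valid_word \<G> c"
    and "x = gog_class \<G> T a" "y = gog_class \<G> T b" "z = gog_class \<G> T c"
    unfolding carrier_pi1 by auto
  then show "x \<otimes>\<^bsub>pi1 \<G> T\<^esub> y \<in> carrier (pi1 \<G> T)"
    and "x \<otimes>\<^bsub>pi1 \<G> T\<^esub> y \<otimes>\<^bsub>pi1 \<G> T\<^esub> z = x \<otimes>\<^bsub>pi1 \<G> T\<^esub> (y \<otimes>\<^bsub>pi1 \<G> T\<^esub> z)"
    and "\<one>\<^bsub>pi1 \<G> T\<^esub> \<otimes>\<^bsub>pi1 \<G> T\<^esub> x = x"
    unfolding carrier_pi1 one_pi1 using nil by (auto simp: mult_pi1)
  have "gog_class \<G> T (inv_word \<G> a) \<otimes>\<^bsub>pi1 \<G> T\<^esub> x = \<one>\<^bsub>pi1 \<G> T\<^esub>"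
    using \<open>valid_word \<G> a\<close> \<open>x = gog_class \<G> T a\<close> valid_word_inv_word[OF assms]
      gog_class_eq[OF gog_eq_inv_word[OF assms]] by (simp add: mult_pi1 one_pi1)
  then show "\<exists>x'\<in>carrier (pi1 \<G> T). x' \<otimes>\<^bsub>pi1 \<G> T\<^esub> x = \<one>\<^bsub>pi1 \<G> T\<^esub>"
    using \<open>valid_word \<G> a\<close> valid_word_inv_word[OF assms] unfolding carrier_pi1 by blast
qed

lemma vertex_inclusion_hom:
  assumes "graph_of_groups \<G>" "v \<in> verts \<G>"
  shows "vertex_inclusion \<G> T v \<in> hom (vgrp \<G> v) (pi1 \<G> T)"
proof (rule homI)
  fix a assume "a \<in> carrier (vgrp \<G> v)"
  then show "vertex_inclusion \<G> T v a \<in> carrier (pi1 \<G> T)"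
    using assms(2) unfolding vertex_inclusion_def carrier_pi1 valid_word_def valid_letter_def by auto
next
  fix a b assume "a \<in> carrier (vgrp \<G> v)" "b \<in> carrier (vgrp \<G> v)"
  then have "valid_word \<G> [VL v a]" "valid_word \<G> [VL v b]"
    and "gog_eq \<G> T [VL v a, VL v b] [VL v (a \<otimes>\<^bsub>vgrp \<G> v\<^esub> b)]"
    using assms(2) gog_eq.vmult unfolding valid_word_def valid_letter_def by auto
  then show "vertex_inclusion \<G> T v (a \<otimes>\<^bsub>vgrp \<G> v\<^esub> b) =
      vertex_inclusion \<G> T v a \<otimes>\<^bsub>pi1 \<G> T\<^esub> vertex_inclusion \<G> T v b"
    unfolding vertex_inclusion_def by (simp add: mult_pi1 gog_class_eq)
qed

lemma retract_of_vertex_group: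
  assumes p: "Factorial_Ring.prime p" and graph: "graph_of_groups \<G>"
    and res: "residually_p_finite (pi1 \<G> T) p" and v: "v \<in> verts \<G>"
    and inj: "inj_on (vertex_inclusion \<G> T v) (carrier (vgrp \<G> v))"
    and full: "induces_full_p (pi1 \<G> T) p (vertex_subgroup \<G> T v)"
    and closed: "p_closed (pi1 \<G> T) p (vertex_subgroup \<G> T v)"
    and H: "is_retract (vgrp \<G> v) H"
  shows "p_closed (pi1 \<G> T) p (vertex_inclusion \<G> T v ` H) \<and>
    induces_full_p (pi1 \<G> T) p (vertex_inclusion \<G> T v ` H)"
proof -
  have pi1: "group (pi1 \<G> T)" using group_pi1[OF graph] .
  have hom: "vertex_inclusion \<G> T v \<in> hom (vgrp \<G> v) (pi1 \<G> T)"
    using vertex_inclusion_hom[OF graph v] .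
  have "group (vgrp \<G> v)" using graph v unfolding graph_of_groups_def by blast
  then have "subgroup (vertex_subgroup \<G> T v) (pi1 \<G> T)"
    and "is_retract ((pi1 \<G> T)\<lparr>carrier := vertex_subgroup \<G> T v\<rparr>) (vertex_inclusion \<G> T v ` H)"
    using group_hom.img_is_subgroup[of _ _ "vertex_inclusion \<G> T v"] pi1 hom
      is_retract_image[OF _ pi1 hom inj H]
    unfolding vertex_subgroup_eq by (auto simp: group_hom_def group_hom_axioms_def)
  then show ?thesis
    using retract_of_closed_subgroup[OF pi1 p res] full closed by blast
qed

section \<open>Embedding the vertex groups\<close>

lemma adj_by_mono: "S \<subseteq> S' \<Longrightarrow> adj_by \<G> S \<subseteq> adj_by \<G> S'"
  unfolding adj_by_def by blast

lemma sym_adj_by: "sym (adj_by \<G> S)"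
  unfolding adj_by_def sym_def by blast

lemma connected_by_mono: "S \<subseteq> S' \<Longrightarrow> connected_by \<G> S \<Longrightarrow> connected_by \<G> S'"
  unfolding connected_by_def using rtrancl_mono[OF adj_by_mono[of S S' \<G>]] by blast

lemma connected_byI:
  assumes "\<And>w. w \<in> verts \<G> \<Longrightarrow> (w, u) \<in> (adj_by \<G> S)\<^sup>*"
  shows "connected_by \<G> S"
  unfolding connected_by_def
proof (intro ballI)
  fix v w assume "v \<in> verts \<G>" "w \<in> verts \<G>"
  then have "(v, u) \<in> (adj_by \<G> S)\<^sup>*" and "(w, u) \<in> (adj_by \<G> S)\<^sup>*"
    using assms by auto
  then show "(v, w) \<in> (adj_by \<G> S)\<^sup>*"
    using symD[OF sym_rtrancl[OF sym_adj_by]] rtrancl_trans by metis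
qed

locale gog_tree =
  fixes \<G> :: "('v,'e,'a,'b) gog" and T :: "'e set"
  assumes graph: "graph_of_groups \<G>" and tree: "maximal_tree \<G> T"
begin

abbreviation "V \<equiv> verts \<G>"
abbreviation "s \<equiv> src \<G>"
abbreviation "t \<equiv> tgt \<G>"
abbreviation "A \<equiv> vgrp \<G>"

lemma ends_in_verts: "e \<in> edges \<G> \<Longrightarrow> s e \<in> V \<and> t e \<in> V"
  using graph unfolding graph_of_groups_def by blast

lemma group_vgrp: "v \<in> V \<Longrightarrow> group (A v)"
  using graph unfolding graph_of_groups_def by blast

lemma tree_subset: "T \<subseteq> edges \<G>"
  using tree unfolding maximal_tree_def by blast

lemma tree_path: "u \<in> V \<Longrightarrow> w \<in> V \<Longrightarrow> (w, u) \<in> (adj_by \<G> T)\<^sup>*"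
  using tree unfolding maximal_tree_def connected_by_def by blast

lemma tree_minimal: "e \<in> T \<Longrightarrow> \<not> connected_by \<G> (T - {e})"
  using tree unfolding maximal_tree_def by blast

definition dist :: "'v \<Rightarrow> 'v \<Rightarrow> nat" where
  "dist u w = (LEAST n. (w, u) \<in> adj_by \<G> T ^^ n)"

lemma dist_path:
  assumes "u \<in> V" "w \<in> V"
  shows "(w, u) \<in> adj_by \<G> T ^^ dist u w"
proof -
  obtain n where "(w, u) \<in> adj_by \<G> T ^^ n"
    using tree_path[OF assms] rtrancl_power by blast
  then show ?thesis unfolding dist_def by (rule LeastI)
qed

lemma dist_le: "(w, u) \<in> adj_by \<G> T ^^ n \<Longrightarrow> dist u w \<le> n"
  unfolding dist_def by (rule Least_le)

lemma dist_self [simp]: "dist u u = 0"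
  using dist_le[of u u 0] by simp

lemma dist_eq_0_iff:
  assumes "u \<in> V" "w \<in> V"
  shows "dist u w = 0 \<longleftrightarrow> w = u"
  using dist_path[OF assms] by (cases "dist u w = 0") auto

definition opp :: "'e \<Rightarrow> 'v \<Rightarrow> 'v" where
  "opp e w = (if t e = w then s e else t e)"

definition is_parent_edge :: "'v \<Rightarrow> 'v \<Rightarrow> 'e \<Rightarrow> bool" where
  "is_parent_edge u w e \<longleftrightarrow> e \<in> T \<and> (s e = w \<or> t e = w) \<and> Suc (dist u (opp e w)) = dist u w"

definition parent_edge :: "'v \<Rightarrow> 'v \<Rightarrow> 'e" where
  "parent_edge u w = (SOME e. is_parent_edge u w e)"

lemma parent_edge:
  assumes u: "u \<in> V" and w: "w \<in> V" and "w \<noteq> u"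
  shows "is_parent_edge u w (parent_edge u w)"
proof -
  obtain k where k: "dist u w = Suc k"
    using dist_eq_0_iff[OF u w] \<open>w \<noteq> u\<close> not0_implies_Suc by blast
  then obtain y where wy: "(w, y) \<in> adj_by \<G> T" and yu: "(y, u) \<in> adj_by \<G> T ^^ k"
    using relpow_Suc_D2[OF dist_path[OF u w, unfolded k]] by blast
  obtain e where e: "e \<in> T" "(s e = w \<and> t e = y) \<or> (s e = y \<and> t e = w)"
    using wy unfolding adj_by_def by blast
  then have "y \<in> V" using ends_in_verts tree_subset by blast
  have "dist u w \<le> Suc (dist u y)"
    by (rule dist_le[OF relpow_Suc_I2[OF wy dist_path[OF u \<open>y \<in> V\<close>]]])
  then have "dist u y = k" using k dist_le[OF yu] by simp
  moreover have "opp e w = y" using e(2) unfolding opp_def by auto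
  ultimately have "is_parent_edge u w e"
    unfolding is_parent_edge_def using e k by auto
  then show ?thesis unfolding parent_edge_def by (rule someI)
qed

lemma parent_edge_in_edges:
  "u \<in> V \<Longrightarrow> w \<in> V \<Longrightarrow> w \<noteq> u \<Longrightarrow> parent_edge u w \<in> edges \<G>"
  using parent_edge tree_subset unfolding is_parent_edge_def by blast

lemma opp_parent_edge_in_verts:
  "u \<in> V \<Longrightarrow> w \<in> V \<Longrightarrow> w \<noteq> u \<Longrightarrow> opp (parent_edge u w) w \<in> V"
  using parent_edge_in_edges ends_in_verts unfolding opp_def by auto

text \<open>Minimality of the tree: the parent edges already connect the graph, so none of T can be
  missing from them.\<close>
lemma tree_edge_is_parent_edge:
  assumes u: "u \<in> V" and e: "e \<in> T"
  obtains w where "w \<in> V" "w \<noteq> u" "parent_edge u w = e"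
proof -
  let ?P = "parent_edge u ` (V - {u})"
  have "(w, u) \<in> (adj_by \<G> ?P)\<^sup>*" if "w \<in> V" "dist u w = k" for w k
    using that
  proof (induction k arbitrary: w)
    case 0
    then show ?case using dist_eq_0_iff[OF u] by simp
  next
    case (Suc k)
    then have "w \<noteq> u" by auto
    let ?e = "parent_edge u w"
    have "is_parent_edge u w ?e" using parent_edge[OF u Suc.prems(1) \<open>w \<noteq> u\<close>] .
    then have step: "(w, opp ?e w) \<in> adj_by \<G> ?P" and "dist u (opp ?e w) = k"
      using Suc.prems \<open>w \<noteq> u\<close> unfolding is_parent_edge_def adj_by_def opp_def by auto
    then have "(opp ?e w, u) \<in> (adj_by \<G> ?P)\<^sup>*"
      using Suc.IH opp_parent_edge_in_verts[OF u Suc.prems(1) \<open>w \<noteq> u\<close>] by blast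
    with step show ?case by (rule converse_rtrancl_into_rtrancl)
  qed
  then have "connected_by \<G> ?P" by (intro connected_byI[of _ u]) blast
  moreover have "?P \<subseteq> T"
    using parent_edge[OF u] unfolding is_parent_edge_def by blast
  ultimately have "e \<in> ?P"
    using tree_minimal[OF e] connected_by_mono[of ?P "T - {e}"] by blast
  then show ?thesis using that by blast
qed

end

text \<open>A letter (e, b) stands for the stable letter t_e if b and for its inverse otherwise;
  tau e b multiplies a reduced word by (e, b) on the left.\<close>

fun reduced :: "('e \<times> bool) list \<Rightarrow> bool" where
  "reduced (x # y # w) \<longleftrightarrow> (fst x = fst y \<longrightarrow> snd x = snd y) \<and> reduced (y # w)"
| "reduced _ \<longleftrightarrow> True"

fun tau :: "'e \<Rightarrow> bool \<Rightarrow> ('e \<times> bool) list \<Rightarrow> ('e \<times> bool) list" where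
  "tau e b [] = [(e, b)]"
| "tau e b ((e', b') # w) = (if e' = e \<and> b' = (\<not> b) then w else (e, b) # (e', b') # w)"

lemma reduced_Cons: "reduced (x # w) \<Longrightarrow> reduced w"
  by (cases w) auto

lemma reduced_tau: "reduced w \<Longrightarrow> reduced (tau e b w)"
  by (cases "(e, b, w)" rule: tau.cases) (auto dest: reduced_Cons)

lemma tau_tau: "reduced w \<Longrightarrow> tau e (\<not> b) (tau e b w) = w"
  by (cases "(e, b, w)" rule: tau.cases) (auto elim: reduced.elims)

locale gog_transfer = gog_tree \<G> T for \<G> :: "('v,'e,'a,'b) gog" and T +
  fixes to_src :: "'e \<Rightarrow> 'a \<Rightarrow> 'a" and to_tgt :: "'e \<Rightarrow> 'a \<Rightarrow> 'a"
  assumes to_src_hom: "e \<in> edges \<G> \<Longrightarrow> to_src e \<in> hom (vgrp \<G> (tgt \<G> e)) (vgrp \<G> (src \<G> e))"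
    and to_src_emap: "e \<in> edges \<G> \<Longrightarrow> g \<in> carrier (egrp \<G> e) \<Longrightarrow>
      to_src e (emap_tgt \<G> e g) = emap_src \<G> e g"
    and to_tgt_hom: "e \<in> edges \<G> \<Longrightarrow> to_tgt e \<in> hom (vgrp \<G> (src \<G> e)) (vgrp \<G> (tgt \<G> e))"
    and to_tgt_emap: "e \<in> edges \<G> \<Longrightarrow> g \<in> carrier (egrp \<G> e) \<Longrightarrow>
      to_tgt e (emap_src \<G> e g) = emap_tgt \<G> e g"
begin

definition cross :: "'e \<Rightarrow> 'v \<Rightarrow> 'a \<Rightarrow> 'a" where
  "cross e w = (if t e = w then to_src e else to_tgt e)"

lemma cross_hom: "e \<in> edges \<G> \<Longrightarrow> s e = w \<or> t e = w \<Longrightarrow> cross e w \<in> hom (A w) (A (opp e w))"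
  unfolding cross_def opp_def using to_src_hom[of e] to_tgt_hom[of e] by (cases "t e = w") auto

fun transport_fuel :: "'v \<Rightarrow> nat \<Rightarrow> 'v \<Rightarrow> 'a \<Rightarrow> 'a" where
  "transport_fuel u 0 w = id"
| "transport_fuel u (Suc k) w =
     transport_fuel u k (opp (parent_edge u w) w) \<circ> cross (parent_edge u w) w"

definition transport :: "'v \<Rightarrow> 'v \<Rightarrow> 'a \<Rightarrow> 'a" where
  "transport u w = transport_fuel u (dist u w) w"

lemma transport_self [simp]: "transport u u = id"
  unfolding transport_def by simp

lemma transport_step:
  assumes "u \<in> V" "w \<in> V" "w \<noteq> u"
  shows "transport u w = transport u (opp (parent_edge u w) w) \<circ> cross (parent_edge u w) w"
  using parent_edge[OF assms] unfolding is_parent_edge_def transport_def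
  by (metis transport_fuel.simps(2))

lemma transport_hom:
  assumes u: "u \<in> V"
  shows "w \<in> V \<Longrightarrow> transport u w \<in> hom (A w) (A u)"
proof (induction "dist u w" arbitrary: w)
  case 0
  then show ?case
    using dist_eq_0_iff[OF u] iso_imp_homomorphism[OF id_iso] by (simp add: id_def)
next
  case (Suc k)
  then have "w \<noteq> u" by auto
  let ?e = "parent_edge u w"
  have "is_parent_edge u w ?e" using parent_edge[OF u Suc.prems \<open>w \<noteq> u\<close>] .
  then have "cross ?e w \<in> hom (A w) (A (opp ?e w))" and "dist u (opp ?e w) = k"
    using cross_hom tree_subset Suc.hyps(2) unfolding is_parent_edge_def by auto
  moreover have "transport u (opp ?e w) \<in> hom (A (opp ?e w)) (A u)"
    using Suc.hyps(1) calculation(2) opp_parent_edge_in_verts[OF u Suc.prems \<open>w \<noteq> u\<close>] by blast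
  ultimately show ?case
    using transport_step[OF u Suc.prems \<open>w \<noteq> u\<close>] hom_compose by metis
qed

lemma transport_emap:
  assumes u: "u \<in> V" and e: "e \<in> T" and g: "g \<in> carrier (egrp \<G> e)"
  shows "transport u (t e) (emap_tgt \<G> e g) = transport u (s e) (emap_src \<G> e g)"
proof -
  obtain w where w: "w \<in> V" "w \<noteq> u" "parent_edge u w = e"
    using tree_edge_is_parent_edge[OF u e] by blast
  have e_edge: "e \<in> edges \<G>" using e tree_subset by blast
  have "s e = w \<or> t e = w" using parent_edge[OF u w(1,2)] w(3) unfolding is_parent_edge_def by blast
  then consider "t e = w" | "s e = w" "t e \<noteq> w" by blast
  then show ?thesis
  proof cases
    case 1
    then have "transport u (t e) = transport u (s e) \<circ> to_src e"
      using transport_step[OF u w(1,2)] w(3) unfolding cross_def opp_def by simp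
    then show ?thesis using to_src_emap[OF e_edge g] by simp
  next
    case 2
    then have "transport u (s e) = transport u (t e) \<circ> to_tgt e"
      using transport_step[OF u w(1,2)] w(3) unfolding cross_def opp_def by simp
    then show ?thesis using to_tgt_emap[OF e_edge g] by simp
  qed
qed

text \<open>Sheets are indexed by reduced words in the stable letters of the non-tree edges. Letters
  of tree edges never occur in such words; mapping them to the trivial homomorphism keeps
  sheet_map a homomorphism everywhere.\<close>

fun sheet_map :: "'v \<Rightarrow> ('e \<times> bool) list \<Rightarrow> 'v \<Rightarrow> 'a \<Rightarrow> 'a" where
  "sheet_map v0 [] w = transport v0 w"
| "sheet_map v0 ((e, b) # x) w =
     (if e \<in> edges \<G> - T then
        if b then sheet_map v0 x (s e) \<circ> to_src e \<circ> transport (t e) w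
        else sheet_map v0 x (t e) \<circ> to_tgt e \<circ> transport (s e) w
      else (\<lambda>_. \<one>\<^bsub>A v0\<^esub>))"

lemma sheet_map_hom:
  assumes v0: "v0 \<in> V"
  shows "w \<in> V \<Longrightarrow> sheet_map v0 x w \<in> hom (A w) (A v0)"
proof (induction x arbitrary: w)
  case Nil
  then show ?case using transport_hom v0 by simp
next
  case (Cons l x)
  obtain e b where l: "l = (e, b)" by fastforce
  show ?case
  proof (cases "e \<in> edges \<G> - T")
    case True
    then have "s e \<in> V" "t e \<in> V" using ends_in_verts by auto
    then show ?thesis
      using True Cons l transport_hom to_src_hom to_tgt_hom by (auto intro!: hom_compose)
  next
    case False
    have "(\<lambda>_. \<one>\<^bsub>A v0\<^esub>) \<in> hom (A w) (A v0)"
      using group_vgrp[OF v0] by (intro homI) (auto simp: group.is_monoid)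
    then show ?thesis using False l by auto
  qed
qed

lemma sheet_map_one: "v0 \<in> V \<Longrightarrow> w \<in> V \<Longrightarrow> sheet_map v0 x w \<one>\<^bsub>A w\<^esub> = \<one>\<^bsub>A v0\<^esub>"
  using sheet_map_hom group_vgrp
  by (intro group_hom.hom_one) (simp add: group_hom_def group_hom_axioms_def)

lemma sheet_map_tree_emap:
  assumes v0: "v0 \<in> V" and e: "e \<in> T" and g: "g \<in> carrier (egrp \<G> e)"
  shows "sheet_map v0 x (t e) (emap_tgt \<G> e g) = sheet_map v0 x (s e) (emap_src \<G> e g)"
proof (cases x)
  case Nil
  then show ?thesis using transport_emap[OF v0 e g] by simp
next
  case (Cons l x')
  obtain e' b' where "l = (e', b')" by fastforce
  then show ?thesis
    using Cons transport_emap[OF _ e g] ends_in_verts[of e'] by auto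
qed

lemma sheet_map_stable_emap:
  assumes e: "e \<in> edges \<G> - T" and g: "g \<in> carrier (egrp \<G> e)"
  shows "sheet_map v0 (tau e True x) (t e) (emap_tgt \<G> e g) = sheet_map v0 x (s e) (emap_src \<G> e g)"
proof (cases x)
  case Nil
  then show ?thesis using e to_src_emap[OF _ g] by simp
next
  case (Cons l x')
  obtain e' b' where "l = (e', b')" by fastforce
  then show ?thesis
    using Cons e to_src_emap[OF _ g] to_tgt_emap[OF _ g] by auto
qed

text \<open>Words act on functions from sheets to A v0. Only the values on reduced sheets are
  meaningful: the relations of the presentation are respected there (act_gog_eq).\<close>

definition act_letter ::
    "'v \<Rightarrow> ('v,'e,'a) letter \<Rightarrow> (('e \<times> bool) list \<Rightarrow> 'a) \<Rightarrow> ('e \<times> bool) list \<Rightarrow> 'a" where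
  "act_letter v0 l f = (case l of
      VL w a \<Rightarrow> if w \<in> V \<and> a \<in> carrier (A w) then (\<lambda>x. sheet_map v0 x w a \<otimes>\<^bsub>A v0\<^esub> f x) else f
    | TL e b \<Rightarrow> if e \<in> edges \<G> - T then f \<circ> tau e b else f)"

definition act :: "'v \<Rightarrow> ('v,'e,'a) letter list \<Rightarrow> (('e \<times> bool) list \<Rightarrow> 'a) \<Rightarrow> ('e \<times> bool) list \<Rightarrow> 'a" where
  "act v0 ws f = foldr (act_letter v0) ws f"

lemma act_Nil [simp]: "act v0 [] f = f"
  and act_Cons [simp]: "act v0 (l # ws) f = act_letter v0 l (act v0 ws f)"
  and act_append: "act v0 (u @ w) f = act v0 u (act v0 w f)"
  unfolding act_def by simp_all

lemma act_letter_VL: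
  "w \<in> V \<Longrightarrow> a \<in> carrier (A w) \<Longrightarrow> act_letter v0 (VL w a) f = (\<lambda>x. sheet_map v0 x w a \<otimes>\<^bsub>A v0\<^esub> f x)"
  unfolding act_letter_def by simp

lemma act_letter_TL:
  "act_letter v0 (TL e b) f = (if e \<in> edges \<G> - T then f \<circ> tau e b else f)"
  unfolding act_letter_def by simp

lemma act_in_carrier:
  assumes v0: "v0 \<in> V"
  shows "f \<in> UNIV \<rightarrow> carrier (A v0) \<Longrightarrow> act v0 ws f \<in> UNIV \<rightarrow> carrier (A v0)"
proof (induction ws)
  case (Cons l ws)
  then show ?case
    using hom_in_carrier[OF sheet_map_hom[OF v0]] group.is_monoid[OF group_vgrp[OF v0]]
    by (auto simp: act_letter_def monoid.m_closed Pi_iff split: letter.split)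
qed simp

lemma act_cong_reduced:
  "\<forall>x. reduced x \<longrightarrow> f x = f' x \<Longrightarrow> \<forall>x. reduced x \<longrightarrow> act v0 ws f x = act v0 ws f' x"
  by (induction ws) (auto simp: act_letter_def reduced_tau split: letter.split)

lemma act_gog_eq:
  assumes v0: "v0 \<in> V"
  shows "gog_eq \<G> T u w \<Longrightarrow> f \<in> UNIV \<rightarrow> carrier (A v0) \<Longrightarrow> reduced x \<Longrightarrow>
    act v0 u f x = act v0 w f x"
proof (induction arbitrary: f x rule: gog_eq.induct)
  case (ctx u w x y)
  have "act v0 y f \<in> UNIV \<rightarrow> carrier (A v0)" using act_in_carrier[OF v0 ctx.prems(1)] .
  then show ?case
    using ctx.IH act_cong_reduced[of "act v0 u (act v0 y f)" "act v0 w (act v0 y f)"] ctx.prems(2)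
    by (simp add: act_append)
next
  case (vone v)
  have "monoid (A v0)" using group.is_monoid[OF group_vgrp[OF v0]] .
  moreover have "\<one>\<^bsub>A v\<^esub> \<in> carrier (A v)" using group.is_monoid[OF group_vgrp[OF vone.hyps]] by simp
  ultimately show ?case
    using vone.hyps vone.prems(1) sheet_map_one[OF v0 vone.hyps] by (simp add: act_letter_VL Pi_iff)
next
  case (vmult v a b)
  have "monoid (A v0)" using group.is_monoid[OF group_vgrp[OF v0]] .
  moreover have "a \<otimes>\<^bsub>A v\<^esub> b \<in> carrier (A v)"
    using vmult.hyps group.is_monoid[OF group_vgrp[OF vmult.hyps(1)]] by (simp add: monoid.m_closed)
  moreover note hom = sheet_map_hom[OF v0 vmult.hyps(1), of x]
  ultimately show ?case
    using vmult.hyps vmult.prems(1) hom_in_carrier[OF hom]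
    by (simp add: act_letter_VL hom_mult[OF hom] monoid.m_assoc Pi_iff)
next
  case (tconj e g)
  have "t e \<in> V" "s e \<in> V" using ends_in_verts[OF tconj.hyps(1)] by auto
  moreover have "emap_tgt \<G> e g \<in> carrier (A (t e))" "emap_src \<G> e g \<in> carrier (A (s e))"
    using graph tconj.hyps unfolding graph_of_groups_def by (auto intro: hom_in_carrier)
  ultimately show ?case
    using tconj.prems(2) tconj.hyps sheet_map_tree_emap[OF v0 _ tconj.hyps(2)]
      sheet_map_stable_emap[OF _ tconj.hyps(2)] tau_tau[of x e True]
    by (cases "e \<in> T") (simp_all add: act_letter_VL act_letter_TL)
qed (auto simp: act_letter_TL tau_tau[of _ _ True, simplified] tau_tau[of _ _ False, simplified])

lemma vertex_inclusion_inj: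
  assumes v0: "v0 \<in> V"
  shows "inj_on (vertex_inclusion \<G> T v0) (carrier (A v0))"
proof (rule inj_onI)
  fix a b assume a: "a \<in> carrier (A v0)" and b: "b \<in> carrier (A v0)"
    and "vertex_inclusion \<G> T v0 a = vertex_inclusion \<G> T v0 b"
  moreover have "valid_word \<G> [VL v0 a]"
    using v0 a unfolding valid_word_def valid_letter_def by simp
  ultimately have eq: "gog_eq \<G> T [VL v0 b] [VL v0 a]"
    unfolding vertex_inclusion_def by (metis gog_class_eqD)
  \<comment> \<open>Act on the constant function \<open>\<one>\<close> and read off the value on the sheet [].\<close>
  have one: "(\<lambda>_. \<one>\<^bsub>A v0\<^esub>) \<in> UNIV \<rightarrow> carrier (A v0)"
    using group.is_monoid[OF group_vgrp[OF v0]] by simp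
  have "act v0 [VL v0 b] (\<lambda>_. \<one>\<^bsub>A v0\<^esub>) [] = act v0 [VL v0 a] (\<lambda>_. \<one>\<^bsub>A v0\<^esub>) []"
    using act_gog_eq[OF v0 eq one] by simp
  then show "a = b"
    using v0 a b group.is_monoid[OF group_vgrp[OF v0]] by (simp add: act_letter_VL)
qed

end

lemma vertex_inclusion_inj_if_retracts:
  assumes graph: "graph_of_groups \<G>" and tree: "maximal_tree \<G> T"
    and retracts: "\<forall>e\<in>edges \<G>.
           is_retract (vgrp \<G> (tgt \<G> e)) (emap_tgt \<G> e ` carrier (egrp \<G> e)) \<and>
           is_retract (vgrp \<G> (src \<G> e)) (emap_src \<G> e ` carrier (egrp \<G> e))"
    and v: "v \<in> verts \<G>"
  shows "inj_on (vertex_inclusion \<G> T v) (carrier (vgrp \<G> v))"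
proof -
  have "\<forall>e\<in>edges \<G>. \<exists>\<phi>\<in>hom (vgrp \<G> (tgt \<G> e)) (vgrp \<G> (src \<G> e)).
      \<forall>g\<in>carrier (egrp \<G> e). \<phi> (emap_tgt \<G> e g) = emap_src \<G> e g"
    using retract_transfer_hom retracts graph unfolding graph_of_groups_def by blast
  then obtain to_src where to_src: "\<forall>e\<in>edges \<G>. to_src e \<in> hom (vgrp \<G> (tgt \<G> e)) (vgrp \<G> (src \<G> e)) \<and>
      (\<forall>g\<in>carrier (egrp \<G> e). to_src e (emap_tgt \<G> e g) = emap_src \<G> e g)"
    by metis
  have "\<forall>e\<in>edges \<G>. \<exists>\<phi>\<in>hom (vgrp \<G> (src \<G> e)) (vgrp \<G> (tgt \<G> e)).
      \<forall>g\<in>carrier (egrp \<G> e). \<phi> (emap_src \<G> e g) = emap_tgt \<G> e g"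
    using retract_transfer_hom retracts graph unfolding graph_of_groups_def by blast
  then obtain to_tgt where to_tgt: "\<forall>e\<in>edges \<G>. to_tgt e \<in> hom (vgrp \<G> (src \<G> e)) (vgrp \<G> (tgt \<G> e)) \<and>
      (\<forall>g\<in>carrier (egrp \<G> e). to_tgt e (emap_src \<G> e g) = emap_tgt \<G> e g)"
    by metis
  interpret gog_transfer \<G> T to_src to_tgt
    using graph tree to_src to_tgt by unfold_locales auto
  show ?thesis using vertex_inclusion_inj[OF v] .
qed

theorem lemma4p2:
  fixes \<G> :: "('v,'e,'a,'b) gog" and T :: "'e set" and p :: nat
  assumes "Factorial_Ring.prime p"
    and "graph_of_groups \<G>"
    and "maximal_tree \<G> T"
    and "\<forall>e\<in>edges \<G>.
           is_retract (vgrp \<G> (tgt \<G> e)) (emap_tgt \<G> e ` carrier (egrp \<G> e)) \<and>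
           is_retract (vgrp \<G> (src \<G> e)) (emap_src \<G> e ` carrier (egrp \<G> e))"
  shows "p_efficient \<G> T p \<longleftrightarrow>
           residually_p_finite (pi1 \<G> T) p \<and>
           (\<forall>v\<in>verts \<G>. induces_full_p (pi1 \<G> T) p (vertex_subgroup \<G> T v)) \<and>
           (\<forall>v\<in>verts \<G>. p_closed (pi1 \<G> T) p (vertex_subgroup \<G> T v))"
proof -
  have retract_subgroups: "p_closed (pi1 \<G> T) p (vertex_inclusion \<G> T v ` H) \<and>
      induces_full_p (pi1 \<G> T) p (vertex_inclusion \<G> T v ` H)"
    if "residually_p_finite (pi1 \<G> T) p" "v \<in> verts \<G>"
      "induces_full_p (pi1 \<G> T) p (vertex_subgroup \<G> T v)"
      "p_closed (pi1 \<G> T) p (vertex_subgroup \<G> T v)" "is_retract (vgrp \<G> v) H" for v H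
    using retract_of_vertex_group[OF assms(1,2) that(1,2)
        vertex_inclusion_inj_if_retracts[OF assms(2-4) that(2)] that(3-5)] .
  show ?thesis
    unfolding p_efficient_def edge_subgroup_tgt_eq edge_subgroup_src_eq
    using retract_subgroups assms(2,4) unfolding graph_of_groups_def by blast
qed

end
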